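(* Consider the Bayesian stochastic multi-armed bandit setting described in the context, with finite arm set $\mathcal{A}=\{1,\dots,K\}$ and rewards in $[0,1]$. Let $\equiv$ be an equivalence relation on $\mathcal{A}$, and write $[a]$ for the equivalence class of $a$. Suppose that for every $t$ and every arm $a$, $Y_{t,a}=(a,Z_{t,[a]})$ for random variables $Z_{t,[a]}:\Omega\to\mathcal{Z}$ (one for each equivalence class), so that playing arm $a$ at time $t$ reveals $Z_{t,[a]}$ and hence the outcomes of all arms in the class of $a$. Then, for the Thompson sampling policy, the information ratio satisfies $\Gamma_t\le \frac{1}{2}\,|\mathcal{A}/\!\equiv|$ for every $t$, i.e. at most half the number of equivalence classes.
   Context: Bayesian setting: an unknown parameter $\theta$ is drawn from a prior; given $\theta$, the outcome vectors $Y_t=(Y_{t,a})_{a\in\mathcal{A}}$, $t=1,2,\dots$, are i.i.d. with a distribution $P_\theta$, taking values in a set $\mathcal{Y}$, and the reward of arm $a$ at time $t$ is $R(Y_{t,a})$ for a fixed function $R:\mathcal{Y}\to[0,1]$. The optimal arm is $A^*=\arg\max_{a}\mathbb{E}[R(Y_{t,a})\mid\theta]$. At round $t$ the agent plays $A_t$ and observes $Y_{t,A_t}$; the history $h_t$ consists of the previous arms and observations. Write $\mathbb{E}_t[\cdot]=\mathbb{E}[\cdot\mid h_t]$, $\mathbb{P}_t(\cdot)=\mathbb{P}(\cdot\mid h_t)$, and $I_t$ for mutual information conditioned on $h_t$. Thompson sampling selects $A_t$ so that $\mathbb{P}_t(A_t=a)=\mathbb{P}_t(A^*=a)$ for all $a$,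 with $A_t$ conditionally independent of $(\theta, Y_t)$ given $h_t$. The information ratio is $\Gamma_t=\dfrac{\big(\mathbb{E}_t[R(Y_{t,A^*})-R(Y_{t,A_t})]\big)^2}{I_t\big(A^*;(A_t,Y_{t,A_t})\big)}$. *)

theory Defs
  imports "HOL-Probability.Probability"
begin

text \<open>Single round t of the Bayesian bandit, viewed under the posterior given the
  history h_t: the probability space M is the conditional law given h_t.\<close>

definition class_outcome :: "('a \<times> 'a) set \<Rightarrow> ('a set \<Rightarrow> 'o \<Rightarrow> 'z) \<Rightarrow> 'a \<Rightarrow> 'o \<Rightarrow> 'a \<times> 'z" where
  "class_outcome E Z a \<omega> = (a, Z (E `` {a}) \<omega>)"

definition info_ratio ::
  "'o measure \<Rightarrow> 'y measure \<Rightarrow> ('y \<Rightarrow> real) \<Rightarrow> ('a \<Rightarrow> 'o \<Rightarrow> 'y)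
   \<Rightarrow> ('o \<Rightarrow> 'a) \<Rightarrow> ('o \<Rightarrow> 'a) \<Rightarrow> real" where
  "info_ratio M Ysp R Y Astar At =
     (prob_space.expectation M (\<lambda>\<omega>. R (Y (Astar \<omega>) \<omega>) - R (Y (At \<omega>) \<omega>)))\<^sup>2 /
     prob_space.mutual_information M (exp 1) (count_space UNIV) (count_space UNIV \<Otimes>\<^sub>M Ysp)
        Astar (\<lambda>\<omega>. (At \<omega>, Y (At \<omega>) \<omega>))"

end

theory Submission
  imports Defs
begin

text \<open>By the Donsker--Varadhan variational formula, the mutual information between A* and the
  observation O = (A_t, Y_{t,A_t}) dominates E g(A*, O) for every bounded g with E exp g \<le> 1 under
  the product of the two marginals. When A* and A_t lie in the same class the observation reveals
  the outcome of A*, so one may take g = l_b (R(Y_{A*}) - E R(Y_{A*})) - l_b^2/8 on that event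
  (b = A_t) and g = 0 otherwise: under the product law A_t is independent of the environment, and
  Hoeffding's lemma gives E exp g \<le> 1. Under the joint law, Thompson sampling turns E g into a
  quadratic expression in the weights l whose linear part collects the covariances
  Cov(1{A* = a}, R(Y_a)); these sum to the expected regret. Choosing l_b inversely proportional
  to the probability that A* falls into the class of b and optimising the remaining scale yields
  I(A*; O) \<ge> 2 regret^2 / (number of classes).\<close>

lemma sum_UNIV_quotient:
  fixes f :: "'a::finite \<Rightarrow> 'b::comm_monoid_add"
  assumes "equiv UNIV E"
  shows "sum f UNIV = (\<Sum>C\<in>UNIV // E. sum f C)"
proof -
  have "sum f (\<Union>(UNIV // E)) = (\<Sum>C\<in>UNIV // E. sum f C)"
    using sum.Union_disjoint[of "UNIV // E" f] quotient_disj[OF assms] by auto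
  then show ?thesis
    by (simp add: Union_quotient[OF assms])
qed

lemma equiv_class_eq_quotient:
  assumes "equiv UNIV E" "C \<in> UNIV // E" "b \<in> C"
  shows "E `` {b} = C"
  using assms by (metis quotientE equiv_class_eq_iff Image_singleton_iff)

lemma class_weighted_sum_ge:
  fixes p D :: "'a::finite \<Rightarrow> real"
  assumes E: "equiv UNIV E" and p_nonneg: "\<And>a. 0 \<le> p a" and D: "\<And>a. p a = 0 \<Longrightarrow> D a = 0"
  shows "\<mu> * sum D UNIV - real (card (UNIV // E)) * \<mu>\<^sup>2 / 8
    \<le> (\<Sum>b\<in>UNIV. p b * (\<Sum>a\<in>E `` {b}. \<mu> / sum p (E `` {b}) * D a
                                   - (\<mu> / sum p (E `` {b}))\<^sup>2 * p a / 8))"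
    (is "_ \<le> ?rhs")
proof -
  have class_term: "\<mu> * sum D C - \<mu>\<^sup>2 / 8
      \<le> (\<Sum>b\<in>C. p b * (\<Sum>a\<in>E `` {b}. \<mu> / sum p (E `` {b}) * D a
                                   - (\<mu> / sum p (E `` {b}))\<^sup>2 * p a / 8))"
    if C: "C \<in> UNIV // E" for C
  proof -
    have "(\<Sum>b\<in>C. p b * (\<Sum>a\<in>E `` {b}. \<mu> / sum p (E `` {b}) * D a
                                   - (\<mu> / sum p (E `` {b}))\<^sup>2 * p a / 8))
        = sum p C * (\<mu> / sum p C * sum D C - (\<mu> / sum p C)\<^sup>2 * sum p C / 8)"
      using equiv_class_eq_quotient[OF E C]
      by (simp add: sum_distrib_right sum_subtractf sum_distrib_left flip: sum_divide_distrib)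
    also have "\<dots> = (if sum p C = 0 then 0 else \<mu> * sum D C - \<mu>\<^sup>2 / 8)"
      by (simp add: field_simps power2_eq_square)
    also have "\<dots> \<ge> \<mu> * sum D C - \<mu>\<^sup>2 / 8"
    proof -
      have "sum D C = 0" if "sum p C = 0"
        using that D p_nonneg by (simp add: sum_nonneg_eq_0_iff)
      then show ?thesis by auto
    qed
    finally show ?thesis .
  qed
  have "\<mu> * sum D UNIV - real (card (UNIV // E)) * \<mu>\<^sup>2 / 8 = (\<Sum>C\<in>UNIV // E. \<mu> * sum D C - \<mu>\<^sup>2 / 8)"
    by (simp add: sum_UNIV_quotient[OF E, of D] sum_subtractf sum_distrib_left)
  also have "\<dots> \<le> ?rhs"
    by (subst sum_UNIV_quotient[OF E]) (rule sum_mono[OF class_term])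
  finally show ?thesis .
qed

lemma mult_diff_ln_le_exp_diff:
  fixes r g :: real
  assumes "0 \<le> r"
  shows "r * (g - ln r) \<le> exp g - r"
proof (cases "r = 0")
  case False
  with assms have r: "0 < r" by simp
  have "ln (exp g / r) \<le> exp g / r - 1"
    using r by (intro ln_le_minus_one) simp
  then have "r * (g - ln r) \<le> r * (exp g / r - 1)"
    using r by (intro mult_left_mono) (simp_all add: ln_div)
  also have "\<dots> = exp g - r"
    using r by (simp add: field_simps)
  finally show ?thesis .
qed simp

text \<open>The positivity assumption excludes the junk value \<open>0\<close> that \<open>KL_divergence\<close> takes when
  the log-density is not integrable.\<close>

lemma integral_le_KL_divergence:
  fixes Q P :: "'b measure" and g :: "'b \<Rightarrow> real"
  assumes "prob_space Q" "prob_space P"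
    and ac: "absolutely_continuous Q P" and sets_eq: "sets P = sets Q"
    and g_meas [measurable]: "g \<in> borel_measurable Q" and g_bounded: "\<And>x. \<bar>g x\<bar> \<le> B"
    and exp_g: "(\<integral>x. exp (g x) \<partial>Q) \<le> 1"
    and KL_pos: "0 < KL_divergence (exp 1) Q P"
  shows "(\<integral>x. g x \<partial>P) \<le> KL_divergence (exp 1) Q P"
proof -
  interpret Q: prob_space Q by fact
  interpret P: prob_space P by fact
  have sf: "sigma_finite_measure P" by (rule P.sigma_finite_measure_axioms)
  define \<rho> where "\<rho> x = enn2real (RN_deriv Q P x)" for x
  have \<rho>_meas [measurable]: "\<rho> \<in> borel_measurable Q" unfolding \<rho>_def by measurable
  have meas_P: "borel_measurable P = borel_measurable Q"
    by (rule measurable_cong_sets[OF sets_eq refl])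
  have KL: "KL_divergence (exp 1) Q P = (\<integral>x. ln (\<rho> x) \<partial>P)"
    unfolding KL_divergence_def entropy_density_def \<rho>_def log_def by (simp add: comp_def)
  have int_ln: "integrable P (\<lambda>x. ln (\<rho> x))"
  proof (rule ccontr)
    assume "\<not> ?thesis"
    then have "(\<integral>x. ln (\<rho> x) \<partial>P) = 0" by (rule not_integrable_integral_eq)
    with KL_pos KL show False by simp
  qed
  have int_g: "integrable P g"
    using g_bounded g_meas meas_P by (intro P.integrable_const_bound[where B=B]) auto
  have RN_integral: "(\<integral>x. f x \<partial>P) = (\<integral>x. \<rho> x * f x \<partial>Q)" if "f \<in> borel_measurable Q" for f
    unfolding \<rho>_def by (rule Q.RN_deriv_integral[OF sf ac sets_eq that])
  have RN_integrable: "integrable P f \<longleftrightarrow> integrable Q (\<lambda>x. \<rho> x * f x)" if "f \<in> borel_measurable Q" for f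
    unfolding \<rho>_def by (rule Q.RN_deriv_integrable[OF sf ac sets_eq that])
  have int_exp_g: "integrable Q (\<lambda>x. exp (g x))"
    using g_bounded by (intro Q.integrable_const_bound[where B="exp B"]) (auto simp: abs_le_iff)
  have int_\<rho>: "integrable Q \<rho>"
    using RN_integrable[of "\<lambda>_. 1"] by simp
  have "(\<integral>x. g x \<partial>P) - KL_divergence (exp 1) Q P = (\<integral>x. g x - ln (\<rho> x) \<partial>P)"
    using KL int_g int_ln by simp
  also have "\<dots> = (\<integral>x. \<rho> x * (g x - ln (\<rho> x)) \<partial>Q)"
    by (intro RN_integral) simp
  also have "\<dots> \<le> (\<integral>x. exp (g x) - \<rho> x \<partial>Q)"
  proof (rule integral_mono)
    show "integrable Q (\<lambda>x. \<rho> x * (g x - ln (\<rho> x)))"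
      using int_g int_ln by (subst RN_integrable[symmetric]) auto
    show "integrable Q (\<lambda>x. exp (g x) - \<rho> x)"
      using int_exp_g int_\<rho> by simp
  qed (simp add: \<rho>_def mult_diff_ln_le_exp_diff)
  also have "\<dots> = (\<integral>x. exp (g x) \<partial>Q) - (\<integral>x. 1 \<partial>P)"
    using int_exp_g int_\<rho> RN_integral[of "\<lambda>_. 1"] by simp
  finally show ?thesis
    using exp_g P.prob_space by simp
qed

lemma (in interval_bounded_random_variable) integrable_exp_centered:
  "integrable M (\<lambda>x. exp (l * (f x - expectation f)))"
proof (rule integrable_const_bound)
  show "AE x in M. norm (exp (l * (f x - expectation f))) \<le> exp (\<bar>l\<bar> * (\<bar>a\<bar> + \<bar>b\<bar> + \<bar>expectation f\<bar>))"
    using AE_in_interval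
  proof eventually_elim
    case (elim x)
    have "l * (f x - expectation f) \<le> \<bar>l\<bar> * \<bar>f x - expectation f\<bar>"
      by (metis abs_ge_self abs_mult)
    also have "\<dots> \<le> \<bar>l\<bar> * (\<bar>a\<bar> + \<bar>b\<bar> + \<bar>expectation f\<bar>)"
      using elim by (intro mult_left_mono) auto
    finally show ?case by simp
  qed
qed simp

lemma (in interval_bounded_random_variable) Hoeffdings_lemma_integral_pos:
  assumes "0 < l"
  shows "(\<integral>x. exp (l * (f x - expectation f)) \<partial>M) \<le> exp (l\<^sup>2 * (b - a)\<^sup>2 / 8)"
  using Hoeffdings_lemma_nn_integral[OF assms] nn_integral_eq_integral[OF integrable_exp_centered]
  by simp

lemma (in interval_bounded_random_variable) Hoeffdings_lemma_integral:
  "(\<integral>x. exp (l * (f x - expectation f)) \<partial>M) \<le> exp (l\<^sup>2 * (b - a)\<^sup>2 / 8)"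
proof (cases l "0 :: real" rule: linorder_cases)
  case less
  interpret reflected: interval_bounded_random_variable M "\<lambda>x. - f x" "- b" "- a"
    by unfold_locales (auto intro: eventually_mono[OF AE_in_interval])
  have "(\<integral>x. exp (- l * (- f x - expectation (\<lambda>x. - f x))) \<partial>M) \<le> exp ((- l)\<^sup>2 * (- a - - b)\<^sup>2 / 8)"
    using less by (intro reflected.Hoeffdings_lemma_integral_pos) simp
  then show ?thesis
    by (simp add: algebra_simps power2_commute)
qed (simp_all add: Hoeffdings_lemma_integral_pos prob_space)

lemma (in prob_space) expectation_eq_sum_indicator:
  fixes A :: "'a \<Rightarrow> 'i::finite" and f :: "'i \<Rightarrow> 'a \<Rightarrow> real"
  assumes A [measurable]: "A \<in> measurable M (count_space UNIV)" and f: "\<And>a. integrable M (f a)"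
  shows "expectation (\<lambda>\<omega>. f (A \<omega>) \<omega>)
           = (\<Sum>a\<in>UNIV. expectation (\<lambda>\<omega>. indicator {a} (A \<omega>) * f a \<omega>))"
proof -
  have "integrable M (\<lambda>\<omega>. indicator {a} (A \<omega>) * f a \<omega>)" for a
  proof (rule Bochner_Integration.integrable_bound[OF f[of a]])
    show "(\<lambda>\<omega>. indicator {a} (A \<omega>) * f a \<omega>) \<in> borel_measurable M"
      using borel_measurable_integrable[OF f] by measurable
  qed (simp add: indicator_def)
  moreover have "f (A \<omega>) \<omega> = (\<Sum>a\<in>UNIV. indicator {a} (A \<omega>) * f a \<omega>)" for \<omega>
    by (simp add: indicator_def)
  ultimately show ?thesis
    using Bochner_Integration.integral_sum[of UNIV M "\<lambda>a \<omega>. indicator {a} (A \<omega>) * f a \<omega>"]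
    by presburger
qed

lemma (in prob_space) expectation_indicator_eq_prob:
  fixes A :: "'a \<Rightarrow> 'i"
  assumes [measurable]: "A \<in> measurable M (count_space UNIV)"
  shows "expectation (\<lambda>\<omega>. indicator {a} (A \<omega>) :: real) = prob {\<omega>\<in>space M. A \<omega> = a}"
proof -
  have "expectation (\<lambda>\<omega>. indicator {a} (A \<omega>) :: real) = expectation (indicator {\<omega>\<in>space M. A \<omega> = a})"
    by (intro Bochner_Integration.integral_cong) (auto simp: indicator_def)
  then show ?thesis
    by simp
qed

lemma (in prob_space) absolutely_continuous_distr_pair:
  fixes X :: "'a \<Rightarrow> 'i::countable"
  assumes X [measurable]: "X \<in> measurable M (count_space UNIV)" and W [measurable]: "W \<in> measurable M T"
  shows "absolutely_continuous (distr M (count_space UNIV) X \<Otimes>\<^sub>M distr M T W)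
                               (distr M (count_space UNIV \<Otimes>\<^sub>M T) (\<lambda>\<omega>. (X \<omega>, W \<omega>)))"
  unfolding absolutely_continuous_def
proof
  let ?X = "distr M (count_space UNIV) X" and ?W = "distr M T W"
  interpret W: prob_space ?W by (rule prob_space_distr) simp
  fix S assume S: "S \<in> null_sets (?X \<Otimes>\<^sub>M ?W)"
  have "sets (?X \<Otimes>\<^sub>M ?W) = sets (count_space UNIV \<Otimes>\<^sub>M T)"
    by (rule sets_pair_measure_cong) simp_all
  then have sets_S: "S \<in> sets (count_space UNIV \<Otimes>\<^sub>M T)"
    using null_setsD2[OF S] by simp
  have "(\<integral>\<^sup>+ \<omega>. emeasure ?W (Pair (X \<omega>) -` S) \<partial>M) = emeasure (?X \<Otimes>\<^sub>M ?W) S"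
    using W.emeasure_pair_measure_alt[OF null_setsD2[OF S]] by (simp add: nn_integral_distr)
  moreover have "(\<lambda>\<omega>. emeasure ?W (Pair (X \<omega>) -` S)) \<in> borel_measurable M"
    using measurable_compose[OF X, of "\<lambda>a. emeasure ?W (Pair a -` S)" borel] by simp
  ultimately have "AE \<omega> in M. emeasure ?W (Pair (X \<omega>) -` S) = 0"
    using null_setsD1[OF S] by (simp add: nn_integral_0_iff_AE)
  moreover have "AE \<omega> in M. \<forall>a\<in>{a. emeasure ?W (Pair a -` S) = 0}. (a, W \<omega>) \<notin> S"
  proof (rule AE_ball_countable')
    fix a assume "a \<in> {a. emeasure ?W (Pair a -` S) = 0}"
    moreover have "W -` (Pair a -` S) \<inter> space M \<in> sets M"
      using sets_Pair1[OF sets_S] by measurable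
    ultimately have "W -` (Pair a -` S) \<inter> space M \<in> null_sets M"
      using sets_Pair1[OF sets_S] by (simp add: emeasure_distr null_setsI)
    then show "AE \<omega> in M. (a, W \<omega>) \<notin> S"
      by (rule AE_I') auto
  qed simp
  ultimately have "AE \<omega> in M. (X \<omega>, W \<omega>) \<notin> S"
    by eventually_elim auto
  then have "AE x in distr M (count_space UNIV \<Otimes>\<^sub>M T) (\<lambda>\<omega>. (X \<omega>, W \<omega>)). x \<notin> S"
    using sets_S by (subst AE_distr_iff) auto
  then show "S \<in> null_sets (distr M (count_space UNIV \<Otimes>\<^sub>M T) (\<lambda>\<omega>. (X \<omega>, W \<omega>)))"
    using sets_S by (simp add: AE_iff_null_sets)
qed

lemma (in prob_space) indep_var_if_measurable_indep_set:
  assumes indep: "indep_set (sets F) (sets G)" and space: "space F = space M" "space G = space M"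
    and X: "X \<in> measurable F S" and Y: "Y \<in> measurable G T"
  shows "indep_var S X T Y"
proof -
  have sub: "sets F \<subseteq> events" "sets G \<subseteq> events"
    using indep_setD_ev1[OF indep] indep_setD_ev2[OF indep] by auto
  have "X \<in> measurable M S" "Y \<in> measurable M T"
    using measurable_mono[of S S F M] measurable_mono[of T T G M] X Y sub space by auto
  moreover have "sigma_sets (space M) {X -` A \<inter> space M | A. A \<in> sets S} \<subseteq> sets F"
    by (rule sets.sigma_sets_subset') (use measurable_sets[OF X] sets.top[of F] space in auto)
  moreover have "sigma_sets (space M) {Y -` A \<inter> space M | A. A \<in> sets T} \<subseteq> sets G"
    by (rule sets.sigma_sets_subset') (use measurable_sets[OF Y] sets.top[of G] space in auto)
  ultimately show ?thesis
    using indep unfolding indep_var_eq indep_sets2_eq by blast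
qed

locale class_bandit = prob_space M
  for M :: "'o measure"
    and Theta :: "'t measure" and theta :: "'o \<Rightarrow> 't"
    and Zsp :: "'z measure" and Z :: "'a::finite set \<Rightarrow> 'o \<Rightarrow> 'z"
    and E :: "('a \<times> 'a) set" and R :: "'a \<times> 'z \<Rightarrow> real"
    and Astar At :: "'o \<Rightarrow> 'a" +
  assumes equiv: "equiv UNIV E"
    and theta: "theta \<in> measurable M Theta"
    and Z: "\<And>c. c \<in> UNIV // E \<Longrightarrow> Z c \<in> measurable M Zsp"
    and R_meas [measurable]: "R \<in> borel_measurable (count_space UNIV \<Otimes>\<^sub>M Zsp)"
    and R_range: "\<And>y. 0 \<le> R y \<and> R y \<le> 1"
    and Astar_meas: "Astar \<in> measurable (vimage_algebra (space M) theta Theta) (count_space UNIV)"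
    and At_meas [measurable]: "At \<in> measurable M (count_space UNIV)"
    and At_indep: "indep_set (sets (vimage_algebra (space M) At (count_space UNIV)))
                     (sets (vimage_algebra (space M) (\<lambda>\<omega>. (theta \<omega>, \<lambda>a. class_outcome E Z a \<omega>))
                                          (Theta \<Otimes>\<^sub>M PiM UNIV (\<lambda>_. count_space UNIV \<Otimes>\<^sub>M Zsp))))"
    and TS: "\<And>a. prob {\<omega>\<in>space M. At \<omega> = a} = prob {\<omega>\<in>space M. Astar \<omega> = a}"
begin

abbreviation Y :: "'a \<Rightarrow> 'o \<Rightarrow> 'a \<times> 'z" where
  "Y \<equiv> class_outcome E Z"

definition env_algebra :: "'o measure" where
  "env_algebra = vimage_algebra (space M) (\<lambda>\<omega>. (theta \<omega>, \<lambda>a. Y a \<omega>))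
                                 (Theta \<Otimes>\<^sub>M PiM UNIV (\<lambda>_. count_space UNIV \<Otimes>\<^sub>M Zsp))"

lemma Z_class_measurable [measurable]: "Z (E `` {a}) \<in> measurable M Zsp"
  using Z by (simp add: quotientI)

lemma Y_measurable [measurable]: "Y a \<in> measurable M (count_space UNIV \<Otimes>\<^sub>M Zsp)"
  unfolding class_outcome_def[abs_def] by measurable

lemma Y_space: "\<omega> \<in> space M \<Longrightarrow> Y a \<omega> \<in> UNIV \<times> space Zsp"
  using measurable_space[OF Y_measurable] by (simp add: space_pair_measure)

lemma space_env_algebra [simp]: "space env_algebra = space M"
  by (simp add: env_algebra_def)

lemma env_measurable:
  "(\<lambda>\<omega>. (theta \<omega>, \<lambda>a. Y a \<omega>))
     \<in> measurable env_algebra (Theta \<Otimes>\<^sub>M PiM UNIV (\<lambda>_. count_space UNIV \<Otimes>\<^sub>M Zsp))"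
  unfolding env_algebra_def
  by (intro measurable_vimage_algebra1)
     (auto simp: space_pair_measure space_PiM measurable_space[OF theta] Y_space)

lemma Y_env_measurable [measurable]: "Y a \<in> measurable env_algebra (count_space UNIV \<Otimes>\<^sub>M Zsp)"
  using measurable_comp[OF env_measurable, of "\<lambda>x. snd x a"] by (simp add: comp_def)

lemma Astar_env_measurable [measurable]: "Astar \<in> measurable env_algebra (count_space UNIV)"
proof -
  have "theta \<in> measurable env_algebra Theta"
    using measurable_comp[OF env_measurable measurable_fst] by (simp add: comp_def)
  then have "sets (vimage_algebra (space M) theta Theta) \<subseteq> sets env_algebra"
    by (intro sets_image_in_sets) simp
  then show ?thesis
    using Astar_meas measurable_mono[of "count_space UNIV" "count_space UNIV"
                                        "vimage_algebra (space M) theta Theta" env_algebra]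
    by auto
qed

lemma measurable_env_algebra:
  assumes "f \<in> measurable env_algebra N"
  shows "f \<in> measurable M N"
proof -
  have "sets env_algebra \<subseteq> sets M"
    unfolding env_algebra_def
    by (intro sets_image_in_sets measurable_Pair theta measurable_PiM_single')
       (auto simp: Y_space space_pair_measure)
  then show ?thesis
    using assms measurable_mono[of N N env_algebra M] by auto
qed

lemma Astar_measurable [measurable]: "Astar \<in> measurable M (count_space UNIV)"
  by (rule measurable_env_algebra) measurable

definition arm_prob :: "'a \<Rightarrow> real" where
  "arm_prob a = prob {\<omega>\<in>space M. Astar \<omega> = a}"

lemma expectation_indicator_At_mult:
  assumes h: "h \<in> borel_measurable env_algebra" "integrable M h"
  shows "expectation (\<lambda>\<omega>. indicator {a} (At \<omega>) * h \<omega>) = arm_prob a * expectation h"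
proof -
  have "At \<in> measurable (vimage_algebra (space M) At (count_space UNIV)) (count_space UNIV)"
    by (rule measurable_vimage_algebra1) simp
  then have "indep_var borel (\<lambda>\<omega>. indicator {a} (At \<omega>) :: real) borel h"
    using At_indep h(1)
    by (intro indep_var_if_measurable_indep_set[where F="vimage_algebra (space M) At (count_space UNIV)" and G=env_algebra])
       (simp_all add: env_algebra_def)
  then have "expectation (\<lambda>\<omega>. indicator {a} (At \<omega>) * h \<omega>)
      = expectation (\<lambda>\<omega>. indicator {a} (At \<omega>) :: real) * expectation h"
    using h(2) by (intro indep_var_lebesgue_integral) (auto intro!: integrable_const_bound[where B=1])
  then show ?thesis
    by (simp add: expectation_indicator_eq_prob TS arm_prob_def)
qed

definition mean_reward :: "'a \<Rightarrow> real" where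
  "mean_reward a = expectation (\<lambda>\<omega>. R (Y a \<omega>))"

definition opt_cov :: "'a \<Rightarrow> real" where
  "opt_cov a = expectation (\<lambda>\<omega>. indicator {a} (Astar \<omega>) * R (Y a \<omega>)) - arm_prob a * mean_reward a"

definition regret :: real where
  "regret = expectation (\<lambda>\<omega>. R (Y (Astar \<omega>) \<omega>) - R (Y (At \<omega>) \<omega>))"

lemma integrable_bounded:
  fixes f :: "'o \<Rightarrow> real"
  assumes "f \<in> borel_measurable M" "\<And>\<omega>. \<bar>f \<omega>\<bar> \<le> B"
  shows "integrable M f"
  using assms by (intro integrable_const_bound[where B=B]) auto

lemma integrable_reward [simp]: "integrable M (\<lambda>\<omega>. R (Y a \<omega>))"
  using R_range by (intro integrable_bounded[where B=1]) (simp_all add: abs_le_iff)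

lemma mean_reward_bounds: "0 \<le> mean_reward a" "mean_reward a \<le> 1"
  unfolding mean_reward_def using R_range
  by (auto intro!: integral_nonneg_AE simp: integral_le_const prob_space)

lemma regret_eq_sum_opt_cov: "regret = (\<Sum>a\<in>UNIV. opt_cov a)"
proof -
  have "regret = expectation (\<lambda>\<omega>. R (Y (Astar \<omega>) \<omega>)) - expectation (\<lambda>\<omega>. R (Y (At \<omega>) \<omega>))"
    unfolding regret_def
    by (intro Bochner_Integration.integral_diff integrable_bounded[where B=1])
       (use R_range in \<open>simp_all add: abs_le_iff measurable_compose_countable[OF Y_measurable]\<close>)
  also have "expectation (\<lambda>\<omega>. R (Y (At \<omega>) \<omega>)) = (\<Sum>a\<in>UNIV. arm_prob a * mean_reward a)"
    by (subst expectation_eq_sum_indicator[OF At_meas])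
       (simp_all add: expectation_indicator_At_mult mean_reward_def)
  also have "expectation (\<lambda>\<omega>. R (Y (Astar \<omega>) \<omega>))
      = (\<Sum>a\<in>UNIV. expectation (\<lambda>\<omega>. indicator {a} (Astar \<omega>) * R (Y a \<omega>)))"
    by (rule expectation_eq_sum_indicator[OF Astar_measurable integrable_reward])
  finally show ?thesis
    by (simp add: opt_cov_def sum_subtractf)
qed

text \<open>A test function for the Donsker--Varadhan bound, evaluated at \<open>(A\<^sup>*, A\<^sub>t, Y A\<^sub>t)\<close>.
  If \<open>A\<^sup>*\<close> and \<open>A\<^sub>t\<close> are equivalent, then \<open>R (A\<^sup>*, z)\<close> is the reward \<open>A\<^sup>*\<close> would have earned,
  so the test function is a centred reward of \<open>A\<^sup>*\<close> and Hoeffding's lemma applies.\<close>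

definition test_fun :: "('a \<Rightarrow> real) \<Rightarrow> 'a \<times> 'a \<times> 'a \<times> 'z \<Rightarrow> real" where
  "test_fun l = (\<lambda>(a, b, _, z). if (a, b) \<in> E then l b * (R (a, z) - mean_reward a) - (l b)\<^sup>2 / 8 else 0)"

lemma test_fun_measurable [measurable]:
  "test_fun l \<in> borel_measurable (count_space UNIV \<Otimes>\<^sub>M (count_space UNIV \<Otimes>\<^sub>M (count_space UNIV \<Otimes>\<^sub>M Zsp)))"
  unfolding test_fun_def split_beta' by measurable

lemma test_fun_bounded: "\<bar>test_fun l x\<bar> \<le> (\<Sum>b\<in>UNIV. \<bar>l b\<bar> + (l b)\<^sup>2 / 8)"
proof -
  obtain a b c z where x: "x = (a, b, c, z)"
    by (cases x) auto
  have "\<bar>R (a, z) - mean_reward a\<bar> \<le> 1"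
    using R_range[of "(a, z)"] mean_reward_bounds[of a] by auto
  then have "\<bar>l b\<bar> * \<bar>R (a, z) - mean_reward a\<bar> \<le> \<bar>l b\<bar>"
    by (simp add: mult_left_le)
  moreover have "\<bar>l b * (R (a, z) - mean_reward a) - (l b)\<^sup>2 / 8\<bar>
      \<le> \<bar>l b * (R (a, z) - mean_reward a)\<bar> + \<bar>(l b)\<^sup>2 / 8\<bar>"
    by (rule abs_triangle_ineq4)
  ultimately have "\<bar>l b * (R (a, z) - mean_reward a) - (l b)\<^sup>2 / 8\<bar> \<le> \<bar>l b\<bar> + (l b)\<^sup>2 / 8"
    by (simp add: abs_mult)
  also have "\<dots> \<le> (\<Sum>b\<in>UNIV. \<bar>l b\<bar> + (l b)\<^sup>2 / 8)"
    by (rule member_le_sum) auto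
  finally show ?thesis
    by (simp add: x test_fun_def sum_nonneg)
qed

lemma test_fun_class:
  assumes "(a, b) \<in> E"
  shows "test_fun l (a, b, Y b \<omega>) = l b * (R (Y a \<omega>) - mean_reward a) - (l b)\<^sup>2 / 8"
  using equiv_class_eq[OF equiv assms] assms by (simp add: test_fun_def class_outcome_def)

lemma integrable_test_fun:
  assumes "g \<in> measurable M (count_space UNIV \<Otimes>\<^sub>M (count_space UNIV \<Otimes>\<^sub>M (count_space UNIV \<Otimes>\<^sub>M Zsp)))"
  shows "integrable M (\<lambda>\<omega>. test_fun l (g \<omega>))"
  using assms test_fun_bounded by (intro integrable_bounded) measurable

lemma sum_arm_prob: "(\<Sum>a\<in>UNIV. arm_prob a) = 1"
  using expectation_eq_sum_indicator[OF Astar_measurable, of "\<lambda>_ _. 1"]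
  by (simp add: arm_prob_def expectation_indicator_eq_prob prob_space)

lemma expectation_indicator_Astar_test_fun:
  "expectation (\<lambda>\<omega>. indicator {a} (Astar \<omega>) * test_fun l (a, b, Y b \<omega>))
     = (if (a, b) \<in> E then l b * opt_cov a - (l b)\<^sup>2 * arm_prob a / 8 else 0)"
proof (cases "(a, b) \<in> E")
  case True
  have int: "integrable M (\<lambda>\<omega>. indicator {a} (Astar \<omega>) * R (Y a \<omega>))"
    using R_range by (intro integrable_bounded[where B=1]) (auto simp: indicator_def)
  have "expectation (\<lambda>\<omega>. indicator {a} (Astar \<omega>) * test_fun l (a, b, Y b \<omega>))
      = expectation (\<lambda>\<omega>. l b * (indicator {a} (Astar \<omega>) * R (Y a \<omega>))
                          - (l b * mean_reward a + (l b)\<^sup>2 / 8) * indicator {a} (Astar \<omega>))"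
    by (simp add: test_fun_class[OF True] algebra_simps)
  also have "\<dots> = l b * expectation (\<lambda>\<omega>. indicator {a} (Astar \<omega>) * R (Y a \<omega>))
                   - (l b * mean_reward a + (l b)\<^sup>2 / 8) * arm_prob a"
    using int by (subst Bochner_Integration.integral_diff)
                 (auto intro!: integrable_bounded[where B=1] simp: expectation_indicator_eq_prob arm_prob_def)
  finally show ?thesis
    using True by (simp add: opt_cov_def algebra_simps)
qed (simp add: test_fun_def)

definition obs :: "'o \<Rightarrow> 'a \<times> 'a \<times> 'z" where
  "obs \<omega> = (At \<omega>, Y (At \<omega>) \<omega>)"

abbreviation obs_space :: "('a \<times> 'a \<times> 'z) measure" where
  "obs_space \<equiv> count_space UNIV \<Otimes>\<^sub>M (count_space UNIV \<Otimes>\<^sub>M Zsp)"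

lemma obs_measurable [measurable]: "obs \<in> measurable M obs_space"
  unfolding obs_def by (intro measurable_Pair At_meas measurable_compose_countable[OF Y_measurable At_meas])

lemma sum_class_eq_sum_if: "(\<Sum>a\<in>E `` {b}. f a) = (\<Sum>a\<in>UNIV. if (a, b) \<in> E then f a else 0)"
proof -
  have "E `` {b} = {a \<in> UNIV. (a, b) \<in> E}"
    using equiv unfolding equiv_def sym_def by blast
  then show ?thesis
    using sum.inter_filter[of UNIV f "\<lambda>a. (a, b) \<in> E"] by simp
qed

lemma integral_test_fun_joint:
  "(\<integral>x. test_fun l x \<partial>distr M (count_space UNIV \<Otimes>\<^sub>M obs_space) (\<lambda>\<omega>. (Astar \<omega>, obs \<omega>)))
     = (\<Sum>b\<in>UNIV. arm_prob b * (\<Sum>a\<in>E `` {b}. l b * opt_cov a - (l b)\<^sup>2 * arm_prob a / 8))"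
proof -
  have "(\<integral>x. test_fun l x \<partial>distr M (count_space UNIV \<Otimes>\<^sub>M obs_space) (\<lambda>\<omega>. (Astar \<omega>, obs \<omega>)))
      = expectation (\<lambda>\<omega>. test_fun l (Astar \<omega>, At \<omega>, Y (At \<omega>) \<omega>))"
    by (subst integral_distr) (simp_all add: obs_def)
  also have "\<dots> = (\<Sum>b\<in>UNIV. expectation (\<lambda>\<omega>. indicator {b} (At \<omega>) * test_fun l (Astar \<omega>, b, Y b \<omega>)))"
    by (rule expectation_eq_sum_indicator[OF At_meas integrable_test_fun]) measurable
  also have "\<dots> = (\<Sum>b\<in>UNIV. arm_prob b * expectation (\<lambda>\<omega>. test_fun l (Astar \<omega>, b, Y b \<omega>)))"
    by (intro sum.cong refl expectation_indicator_At_mult integrable_test_fun) measurable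
  also have "\<dots> = (\<Sum>b\<in>UNIV. arm_prob b *
      (\<Sum>a\<in>UNIV. expectation (\<lambda>\<omega>. indicator {a} (Astar \<omega>) * test_fun l (a, b, Y b \<omega>))))"
    by (intro sum.cong refl arg_cong[where f="(*) _"] expectation_eq_sum_indicator[OF Astar_measurable integrable_test_fun])
       measurable
  also have "\<dots> = (\<Sum>b\<in>UNIV. arm_prob b * (\<Sum>a\<in>E `` {b}. l b * opt_cov a - (l b)\<^sup>2 * arm_prob a / 8))"
    by (simp add: expectation_indicator_Astar_test_fun sum_class_eq_sum_if)
  finally show ?thesis .
qed

lemma expectation_exp_test_fun_le_1: "expectation (\<lambda>\<omega>. exp (test_fun l (a, b, Y b \<omega>))) \<le> 1"
proof (cases "(a, b) \<in> E")
  case True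
  interpret reward: interval_bounded_random_variable M "\<lambda>\<omega>. R (Y a \<omega>)" 0 1
    using R_range by unfold_locales simp_all
  have "expectation (\<lambda>\<omega>. exp (test_fun l (a, b, Y b \<omega>)))
      = expectation (\<lambda>\<omega>. exp (l b * (R (Y a \<omega>) - mean_reward a))) / exp ((l b)\<^sup>2 / 8)"
    by (simp add: test_fun_class[OF True] exp_diff)
  also have "\<dots> \<le> exp ((l b)\<^sup>2 * (1 - 0)\<^sup>2 / 8) / exp ((l b)\<^sup>2 / 8)"
    unfolding mean_reward_def by (intro divide_right_mono reward.Hoeffdings_lemma_integral) simp
  finally show ?thesis
    by simp
qed (simp add: test_fun_def prob_space)

lemma integral_exp_test_fun_obs_le_1: "(\<integral>w. exp (test_fun l (a, w)) \<partial>distr M obs_space obs) \<le> 1"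
proof -
  have int: "integrable M (\<lambda>\<omega>. exp (test_fun l (a, b, Y b \<omega>)))" for b
    using test_fun_bounded
    by (intro integrable_bounded[where B="exp (\<Sum>b\<in>UNIV. \<bar>l b\<bar> + (l b)\<^sup>2 / 8)"]) (auto simp: abs_le_iff)
  have "(\<integral>w. exp (test_fun l (a, w)) \<partial>distr M obs_space obs)
      = expectation (\<lambda>\<omega>. exp (test_fun l (a, At \<omega>, Y (At \<omega>) \<omega>)))"
    by (subst integral_distr) (simp_all add: obs_def)
  also have "\<dots> = (\<Sum>b\<in>UNIV. expectation (\<lambda>\<omega>. indicator {b} (At \<omega>) * exp (test_fun l (a, b, Y b \<omega>))))"
    by (rule expectation_eq_sum_indicator[OF At_meas int])
  also have "\<dots> = (\<Sum>b\<in>UNIV. arm_prob b * expectation (\<lambda>\<omega>. exp (test_fun l (a, b, Y b \<omega>))))"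
    by (intro sum.cong refl expectation_indicator_At_mult int) measurable
  also have "\<dots> \<le> (\<Sum>b\<in>UNIV. arm_prob b * 1)"
    by (intro sum_mono mult_left_mono expectation_exp_test_fun_le_1) (simp add: arm_prob_def)
  finally show ?thesis
    by (simp add: sum_arm_prob)
qed

lemma integral_exp_test_fun_product_le_1:
  "(\<integral>x. exp (test_fun l x) \<partial>(distr M (count_space UNIV) Astar \<Otimes>\<^sub>M distr M obs_space obs)) \<le> 1"
proof -
  let ?A = "distr M (count_space UNIV) Astar" and ?W = "distr M obs_space obs"
  interpret A: prob_space ?A by (rule prob_space_distr) simp
  interpret W: prob_space ?W by (rule prob_space_distr) simp
  interpret AW: pair_prob_space ?A ?W ..
  have "sets (?A \<Otimes>\<^sub>M ?W) = sets (count_space UNIV \<Otimes>\<^sub>M obs_space)"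
    by (rule sets_pair_measure_cong) simp_all
  moreover have "(\<lambda>x. exp (test_fun l x)) \<in> borel_measurable (count_space UNIV \<Otimes>\<^sub>M obs_space)"
    by measurable
  ultimately have "(\<lambda>x. exp (test_fun l x)) \<in> borel_measurable (?A \<Otimes>\<^sub>M ?W)"
    using measurable_cong_sets by blast
  then have "integrable (?A \<Otimes>\<^sub>M ?W) (\<lambda>x. exp (test_fun l x))"
    using test_fun_bounded
    by (intro AW.integrable_const_bound[where B="exp (\<Sum>b\<in>UNIV. \<bar>l b\<bar> + (l b)\<^sup>2 / 8)"])
       (auto simp: abs_le_iff)
  then have "(\<integral>x. exp (test_fun l x) \<partial>(?A \<Otimes>\<^sub>M ?W)) = (\<integral>a. (\<integral>w. exp (test_fun l (a, w)) \<partial>?W) \<partial>?A)"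
    by (rule AW.integral_fst'[symmetric])
  also have "\<dots> \<le> (\<integral>a. 1 \<partial>?A)"
    using integral_exp_test_fun_obs_le_1
    by (intro integral_mono A.integrable_const_bound[where B=1]) auto
  finally show ?thesis
    using A.prob_space by simp
qed

lemma opt_cov_eq_0_if_arm_prob_eq_0:
  assumes "arm_prob a = 0"
  shows "opt_cov a = 0"
proof -
  have int: "integrable M (\<lambda>\<omega>. indicator {a} (Astar \<omega>) * R (Y a \<omega>))"
    using R_range by (intro integrable_bounded[where B=1]) (auto simp: indicator_def)
  have "0 \<le> expectation (\<lambda>\<omega>. indicator {a} (Astar \<omega>) * R (Y a \<omega>))"
    using R_range by (intro integral_nonneg_AE) auto
  moreover have "expectation (\<lambda>\<omega>. indicator {a} (Astar \<omega>) * R (Y a \<omega>))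
      \<le> expectation (\<lambda>\<omega>. indicator {a} (Astar \<omega>) :: real)"
    using R_range int by (intro integral_mono) (auto intro: integrable_bounded[where B=1] simp: indicator_def)
  ultimately show ?thesis
    using assms by (simp add: opt_cov_def expectation_indicator_eq_prob arm_prob_def)
qed

definition info_gain :: real where
  "info_gain = mutual_information (exp 1) (count_space UNIV) obs_space Astar obs"

lemma info_gain_ge:
  assumes "0 < info_gain"
  shows "(\<Sum>b\<in>UNIV. arm_prob b * (\<Sum>a\<in>E `` {b}. l b * opt_cov a - (l b)\<^sup>2 * arm_prob a / 8)) \<le> info_gain"
proof -
  let ?A = "distr M (count_space UNIV) Astar" and ?W = "distr M obs_space obs"
  interpret A: prob_space ?A by (rule prob_space_distr) simp
  interpret W: prob_space ?W by (rule prob_space_distr) simp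
  interpret AW: pair_prob_space ?A ?W ..
  have sets_eq: "sets (?A \<Otimes>\<^sub>M ?W) = sets (count_space UNIV \<Otimes>\<^sub>M obs_space)"
    by (rule sets_pair_measure_cong) simp_all
  have "test_fun l \<in> borel_measurable (?A \<Otimes>\<^sub>M ?W)"
    using measurable_cong_sets[OF sets_eq refl] by simp
  then have "(\<integral>x. test_fun l x \<partial>distr M (count_space UNIV \<Otimes>\<^sub>M obs_space) (\<lambda>\<omega>. (Astar \<omega>, obs \<omega>)))
      \<le> info_gain"
    using assms unfolding info_gain_def mutual_information_def
    by (intro integral_le_KL_divergence[where B="\<Sum>b\<in>UNIV. \<bar>l b\<bar> + (l b)\<^sup>2 / 8"]
          absolutely_continuous_distr_pair test_fun_bounded
          integral_exp_test_fun_product_le_1 prob_space_distr AW.prob_space_axioms)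
       (simp_all add: sets_eq)
  then show ?thesis
    by (simp add: integral_test_fun_joint)
qed

lemma info_ratio_le_half_card_classes:
  "info_ratio M (count_space UNIV \<Otimes>\<^sub>M Zsp) R Y Astar At \<le> real (card (UNIV // E)) / 2"
proof -
  have ratio: "info_ratio M (count_space UNIV \<Otimes>\<^sub>M Zsp) R Y Astar At = regret\<^sup>2 / info_gain"
    unfolding info_ratio_def regret_def info_gain_def obs_def[abs_def] ..
  define N where "N = real (card (UNIV // E))"
  have "0 < N"
    using finite_quotient[of UNIV E] by (simp add: N_def card_gt_0_iff quotient_def)
  show ?thesis
  proof (cases "0 < info_gain")
    case False
    then have "regret\<^sup>2 / info_gain \<le> 0"
      by (intro divide_nonneg_nonpos) auto
    also have "0 \<le> real (card (UNIV // E)) / 2"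
      by simp
    finally show ?thesis
      unfolding ratio .
  next
    case True
    \<comment> \<open>weights \<open>\<mu> / P(A\<^sup>* \<in> [b])\<close>, with the scale \<open>\<mu>\<close> maximising \<open>\<mu> regret - N \<mu>\<^sup>2 / 8\<close>\<close>
    define \<mu> where "\<mu> = 4 * regret / N"
    have "2 * regret\<^sup>2 / N = \<mu> * regret - N * \<mu>\<^sup>2 / 8"
      using \<open>0 < N\<close> by (simp add: \<mu>_def field_simps power2_eq_square)
    also have "\<dots> \<le> (\<Sum>b\<in>UNIV. arm_prob b * (\<Sum>a\<in>E `` {b}.
                  \<mu> / sum arm_prob (E `` {b}) * opt_cov a - (\<mu> / sum arm_prob (E `` {b}))\<^sup>2 * arm_prob a / 8))"
      unfolding N_def regret_eq_sum_opt_cov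
      by (intro class_weighted_sum_ge equiv opt_cov_eq_0_if_arm_prob_eq_0) (simp add: arm_prob_def)
    also have "\<dots> \<le> info_gain"
      using True by (rule info_gain_ge)
    finally show ?thesis
      using True \<open>0 < N\<close> by (simp add: ratio N_def field_simps)
  qed
qed

end

theorem proposition2:
  fixes M :: "'o measure"
    and Theta :: "'t measure" and theta :: "'o \<Rightarrow> 't"
    and Zsp :: "'z measure" and Z :: "'a::finite set \<Rightarrow> 'o \<Rightarrow> 'z"
    and E :: "('a \<times> 'a) set"
    and R :: "'a \<times> 'z \<Rightarrow> real"
    and Astar At :: "'o \<Rightarrow> 'a"
  defines "Y \<equiv> class_outcome E Z"
  defines "Ysp \<equiv> (count_space UNIV \<Otimes>\<^sub>M Zsp :: ('a \<times> 'z) measure)"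
  defines "F\<theta> \<equiv> vimage_algebra (space M) theta Theta"
  assumes M: "prob_space M"
    and equiv: "equiv UNIV E"
    and theta: "theta \<in> measurable M Theta"
    and Z: "\<And>c. c \<in> UNIV // E \<Longrightarrow> Z c \<in> measurable M Zsp"
    and R_meas: "R \<in> borel_measurable Ysp"
    and R_range: "\<And>y. 0 \<le> R y \<and> R y \<le> 1"
    \<comment> \<open>A* is the optimal arm: a function of theta maximising E[R(Y_a) | theta]\<close>
    and Astar_meas: "Astar \<in> measurable F\<theta> (count_space UNIV)"
    and Astar_opt: "AE \<omega> in M. \<forall>a. real_cond_exp M F\<theta> (\<lambda>\<omega>'. R (Y a \<omega>')) \<omega>
                                   \<le> real_cond_exp M F\<theta> (\<lambda>\<omega>'. R (Y (Astar \<omega>) \<omega>')) \<omega>"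
    \<comment> \<open>Thompson sampling: A_t independent of (theta, Y_t), with the law of A*\<close>
    and At_meas: "At \<in> measurable M (count_space UNIV)"
    and At_indep: "prob_space.indep_set M
                     (sets (vimage_algebra (space M) At (count_space UNIV)))
                     (sets (vimage_algebra (space M) (\<lambda>\<omega>. (theta \<omega>, \<lambda>a. Y a \<omega>))
                                          (Theta \<Otimes>\<^sub>M PiM UNIV (\<lambda>_. Ysp))))"
    and TS: "\<And>a. measure M {\<omega>\<in>space M. At \<omega> = a} = measure M {\<omega>\<in>space M. Astar \<omega> = a}"
  shows "info_ratio M Ysp R Y Astar At \<le> real (card (UNIV // E)) / 2"
proof -
  interpret class_bandit M Theta theta Zsp Z E R Astar At
    using M equiv theta Z R_meas R_range Astar_meas At_meas At_indep TS
    unfolding Ysp_def F\<theta>_def Y_def by (intro class_bandit.intro class_bandit_axioms.intro)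
  show ?thesis
    unfolding Y_def Ysp_def by (rule info_ratio_le_half_card_classes)
qed

end
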